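(* For each integer $r\ge2$, $$\lim_{\substack{n\in D_r\\ n\to\infty}}\frac{\mathrm{IR}(X_n)}{\alpha(X_n)}=1.$$
   Context: $D_r=\{x\in\mathbb N:\ d\mid x \text{ for some } d\in\{2,3,\dots,r\}\}$. $X_n$ is the graph on $\{0,\dots,n-1\}$ with $a,b$ adjacent iff $\gcd(a-b,n)=1$. $\alpha(G)$ is the independence number; $\mathrm{IR}(G)$ is the maximum size of an irredundant set, where $S$ is irredundant if every $v\in S$ has a vertex in $N[v]\setminus N[S\setminus\{v\}]$ (closed neighborhoods). *)

theory Defs
  imports Complex_Main
begin

definition D :: "nat \<Rightarrow> nat set" where
  "D r = {x. \<exists>d\<in>{2..r}. d dvd x}"

definition Xadj :: "nat \<Rightarrow> nat \<Rightarrow> nat \<Rightarrow> bool" where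
  "Xadj n a b \<longleftrightarrow> gcd (int a - int b) (int n) = 1"

definition Xverts :: "nat \<Rightarrow> nat set" where
  "Xverts n = {0..<n}"

definition cnbhd :: "nat \<Rightarrow> nat \<Rightarrow> nat set" where
  "cnbhd n v = {u \<in> Xverts n. u = v \<or> Xadj n u v}"

definition cnbhd_set :: "nat \<Rightarrow> nat set \<Rightarrow> nat set" where
  "cnbhd_set n S = (\<Union>v\<in>S. cnbhd n v)"

definition independent :: "nat \<Rightarrow> nat set \<Rightarrow> bool" where
  "independent n S \<longleftrightarrow> S \<subseteq> Xverts n \<and> (\<forall>a\<in>S. \<forall>b\<in>S. a \<noteq> b \<longrightarrow> \<not> Xadj n a b)"

definition irredundant :: "nat \<Rightarrow> nat set \<Rightarrow> bool" where
  "irredundant n S \<longleftrightarrow> S \<subseteq> Xverts n \<and>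
     (\<forall>v\<in>S. cnbhd n v - cnbhd_set n (S - {v}) \<noteq> {})"

definition alpha :: "nat \<Rightarrow> nat" where
  "alpha n = Max (card ` {S. independent n S})"

definition IR :: "nat \<Rightarrow> nat" where
  "IR n = Max (card ` {S. irredundant n S})"

end

theory Submission
  imports Defs "HOL-Computational_Algebra.Primes"
begin

text \<open>
  For \<open>d dvd n\<close> with \<open>2 \<le> d \<le> r\<close> the multiples of \<open>d\<close> are independent, so
  \<open>n \<le> r * alpha n\<close>. An irredundant set splits into the vertices without a neighbour
  in it, which are independent, and the rest, each having a private neighbour \<open>u v \<noteq> v\<close>.
  Coding a vertex by its residues modulo the prime factors of \<open>n\<close>, the code of \<open>u v\<close>
  is disjoint from that of \<open>v\<close> but meets that of every other \<open>w\<close>, so a Bollobas-type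
  set-pair count bounds the rest by \<open>4 ^ \<omega>(n)\<close>, where \<open>\<omega>(n) = card (prime_factors n)\<close>.
  Finally \<open>16 ^ \<omega>(n) \<le> 16 ^ 16 * n\<close>,
  hence \<open>IR n / alpha n \<le> 1 + 4 ^ 16 * r / sqrt n\<close>.
\<close>

lemma card_le_four_pow_if_skew_cross_intersecting:
  fixes a b :: "'i \<Rightarrow> 'a set"
  assumes "finite I"
    and finite: "\<And>i. i \<in> I \<Longrightarrow> finite (a i) \<and> finite (b i)"
    and card: "\<And>i. i \<in> I \<Longrightarrow> card (a i) \<le> m \<and> card (b i) \<le> m"
    and disjoint: "\<And>i. i \<in> I \<Longrightarrow> a i \<inter> b i = {}"
    and cross: "\<And>i j. i \<in> I \<Longrightarrow> j \<in> I \<Longrightarrow> i \<noteq> j \<Longrightarrow> a j \<inter> b i \<noteq> {}"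
  shows "card I \<le> 4 ^ m"
proof -
  define X where "X = (\<Union>i\<in>I. a i \<union> b i)"
  \<comment> \<open>The \<open>E i\<close> are pairwise disjoint by \<open>cross\<close>, and each holds a \<open>4 ^ m\<close>-th of \<open>Pow X\<close>.\<close>
  define E where "E i = {C \<in> Pow X. b i \<subseteq> C \<and> C \<inter> a i = {}}" for i
  have "finite X"
    using \<open>finite I\<close> finite by (auto simp: X_def)
  have E_le: "2 ^ card X \<le> card (E i) * 4 ^ m" if i: "i \<in> I" for i
  proof -
    define Y where "Y = a i \<union> b i"
    have "Y \<subseteq> X"
      using i by (auto simp: X_def Y_def)
    have E_image: "E i = (\<lambda>D. D \<union> b i) ` Pow (X - Y)"
    proof (intro equalityI subsetI)
      fix C assume "C \<in> E i"
      then have "C = (C - Y) \<union> b i" "C - Y \<in> Pow (X - Y)"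
        by (auto simp: E_def Y_def)
      then show "C \<in> (\<lambda>D. D \<union> b i) ` Pow (X - Y)"
        by blast
    next
      fix C assume "C \<in> (\<lambda>D. D \<union> b i) ` Pow (X - Y)"
      then show "C \<in> E i"
        using \<open>Y \<subseteq> X\<close> disjoint[OF i] by (auto simp: E_def Y_def)
    qed
    have "inj_on (\<lambda>D. D \<union> b i) (Pow (X - Y))"
      by (auto simp: inj_on_def Y_def)
    then have "card (E i) = 2 ^ card (X - Y)"
      using \<open>finite X\<close> by (simp add: E_image card_image card_Pow)
    have "card Y \<le> 2 * m"
      using card_Un_le[of "a i" "b i"] card[OF i] by (simp add: Y_def)
    have "card X = card (X - Y) + card Y"
      using \<open>Y \<subseteq> X\<close> \<open>finite X\<close> by (metis card_Diff_subset card_mono finite_subset le_add_diff_inverse2)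
    then have "(2::nat) ^ card X = card (E i) * 2 ^ card Y"
      by (simp add: \<open>card (E i) = 2 ^ card (X - Y)\<close> power_add)
    also have "\<dots> \<le> card (E i) * 2 ^ (2 * m)"
      using \<open>card Y \<le> 2 * m\<close> by (intro mult_le_mono2 power_increasing) simp_all
    also have "\<dots> = card (E i) * 4 ^ m"
      by (simp add: power_mult)
    finally show ?thesis .
  qed
  have E_disjoint: "E i \<inter> E j = {}" if "i \<in> I" "j \<in> I" "i \<noteq> j" for i j
    using cross[OF that] by (auto simp: E_def)
  have "card I * 2 ^ card X = (\<Sum>i\<in>I. 2 ^ card X)"
    by simp
  also have "\<dots> \<le> (\<Sum>i\<in>I. card (E i) * 4 ^ m)"
    by (rule sum_mono) (rule E_le)
  also have "\<dots> = (\<Sum>i\<in>I. card (E i)) * 4 ^ m"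
    by (simp add: sum_distrib_right)
  also have "(\<Sum>i\<in>I. card (E i)) = card (\<Union>i\<in>I. E i)"
    using \<open>finite I\<close> \<open>finite X\<close> E_disjoint
    by (intro card_UN_disjoint[symmetric]) (auto simp: E_def)
  also have "\<dots> \<le> card (Pow X)"
    using \<open>finite X\<close> by (intro card_mono) (auto simp: E_def)
  finally show ?thesis
    using \<open>finite X\<close> by (simp add: card_Pow mult.commute)
qed

lemma pow_card_prime_factors_le:
  fixes n c :: nat
  assumes "n > 0"
  shows "c ^ card (prime_factors n) \<le> c ^ c * n"
proof -
  define P where "P = prime_factors n"
  define Large where "Large = {p \<in> P. c \<le> p}"
  define Small where "Small = {p \<in> P. p < c}"
  have "finite P"
    by (simp add: P_def)
  have "card P = card Small + card Large"
    using \<open>finite P\<close>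
    by (subst card_Un_disjoint[symmetric])
       (auto simp: Small_def Large_def intro: arg_cong[where f = card])
  have "card Small \<le> c"
    using card_mono[of "{..<c}" Small] by (auto simp: Small_def)
  then have small: "c ^ card Small \<le> c ^ c"
    by (cases "c = 0") (auto intro: power_increasing)
  have "c ^ card Large = (\<Prod>p\<in>Large. c)"
    by simp
  also have "\<dots> \<le> (\<Prod>p\<in>Large. p ^ multiplicity p n)"
  proof (rule prod_mono)
    fix p assume p: "p \<in> Large"
    then have "multiplicity p n \<ge> 1"
      using \<open>n > 0\<close> by (simp add: Large_def P_def prime_factors_multiplicity)
    moreover have "p > 0"
      using p by (simp add: Large_def P_def in_prime_factors_iff prime_gt_0_nat)
    ultimately have "p ^ 1 \<le> p ^ multiplicity p n"
      by (intro power_increasing) simp_all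
    then show "0 \<le> c \<and> c \<le> p ^ multiplicity p n"
      using p by (simp add: Large_def)
  qed
  also have "\<dots> \<le> (\<Prod>p\<in>P. p ^ multiplicity p n)"
    using \<open>finite P\<close>
    by (intro dvd_imp_le prod_dvd_prod_subset prod_pos)
       (auto simp: Large_def P_def in_prime_factors_iff prime_gt_0_nat)
  also have "\<dots> = n"
    using prime_factorization_nat[OF \<open>n > 0\<close>] by (simp add: P_def)
  finally have "c ^ card Large \<le> n" .
  then show ?thesis
    using small \<open>card P = card Small + card Large\<close>
    by (simp add: P_def power_add mult_le_mono)
qed

lemma Xadj_iff_mod_prime_factors:
  assumes "n > 0"
  shows "Xadj n a b \<longleftrightarrow> (\<forall>p\<in>prime_factors n. a mod p \<noteq> b mod p)"
proof -
  have mod_eq_iff: "a mod p = b mod p \<longleftrightarrow> int p dvd int a - int b" for p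
    by (metis mod_eq_dvd_iff of_nat_eq_iff of_nat_mod)
  show ?thesis
  proof
    assume "Xadj n a b"
    then show "\<forall>p\<in>prime_factors n. a mod p \<noteq> b mod p"
      unfolding Xadj_def mod_eq_iff
      by (metis gcd_greatest in_prime_factors_iff int_dvd_int_iff not_prime_unit of_nat_1 of_nat_dvd_iff)
  next
    assume coprime_mod: "\<forall>p\<in>prime_factors n. a mod p \<noteq> b mod p"
    show "Xadj n a b"
    proof (rule ccontr)
      define g where "g = gcd (int a - int b) (int n)"
      assume "\<not> Xadj n a b"
      then have "nat g \<noteq> 1"
        by (simp add: Xadj_def g_def)
      then obtain p where "prime p" "p dvd nat g"
        using prime_factor_nat by blast
      then have "int p dvd g"
        by (metis g_def gcd_ge_0_int nat_0_le of_nat_dvd_iff)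
      then have "int p dvd int a - int b" "int p dvd int n"
        by (auto simp: g_def intro: dvd_trans)
      then show False
        using coprime_mod \<open>prime p\<close> \<open>n > 0\<close> by (auto simp: mod_eq_iff in_prime_factors_iff)
    qed
  qed
qed

lemma finite_independent_sets: "finite {S. independent n S}"
  by (rule finite_subset[of _ "Pow (Xverts n)"]) (auto simp: independent_def Xverts_def)

lemma finite_irredundant_sets: "finite {S. irredundant n S}"
  by (rule finite_subset[of _ "Pow (Xverts n)"]) (auto simp: irredundant_def Xverts_def)

lemma card_le_alpha: "independent n S \<Longrightarrow> card S \<le> alpha n"
  unfolding alpha_def using finite_independent_sets by (auto intro: Max_ge)

lemma card_le_IR: "irredundant n S \<Longrightarrow> card S \<le> IR n"
  unfolding IR_def using finite_irredundant_sets by (auto intro: Max_ge)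

lemma IR_attained: "\<exists>S. irredundant n S \<and> card S = IR n"
proof -
  have "{} \<in> {S. irredundant n S}"
    by (simp add: irredundant_def)
  then show ?thesis
    using Max_in[of "card ` {S. irredundant n S}"] finite_irredundant_sets
    unfolding IR_def by fastforce
qed

lemma alpha_attained: "\<exists>S. independent n S \<and> card S = alpha n"
proof -
  have "{} \<in> {S. independent n S}"
    by (simp add: independent_def)
  then show ?thesis
    using Max_in[of "card ` {S. independent n S}"] finite_independent_sets
    unfolding alpha_def by fastforce
qed

lemma irredundant_if_independent:
  assumes "independent n S"
  shows "irredundant n S"
proof -
  have "v \<in> cnbhd n v - cnbhd_set n (S - {v})" if "v \<in> S" for v
    using that assms by (auto simp: cnbhd_def cnbhd_set_def independent_def)
  then show ?thesis
    using assms unfolding irredundant_def independent_def by blast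
qed

lemma alpha_le_IR: "alpha n \<le> IR n"
  using alpha_attained card_le_IR irredundant_if_independent by metis

lemma independent_multiples:
  assumes "d \<ge> 2" "d dvd n"
  shows "independent n ((*) d ` {..<n div d})"
  unfolding independent_def
proof (intro conjI ballI impI)
  show "(*) d ` {..<n div d} \<subseteq> Xverts n"
    using assms by (auto simp: Xverts_def)
next
  fix a b assume "a \<in> (*) d ` {..<n div d}" "b \<in> (*) d ` {..<n div d}"
  then have "int d dvd int a - int b"
    by (auto simp flip: right_diff_distrib)
  then have "int d dvd gcd (int a - int b) (int n)"
    using assms by simp
  moreover have "\<not> int d dvd 1"
    using assms by simp
  ultimately show "\<not> Xadj n a b"
    unfolding Xadj_def by metis
qed

lemma div_le_alpha: "d \<ge> 2 \<Longrightarrow> d dvd n \<Longrightarrow> n div d \<le> alpha n"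
  using card_le_alpha[OF independent_multiples] by (simp add: card_image inj_on_def)

lemma le_mult_alpha_if_in_D:
  assumes "n \<in> D r"
  shows "n \<le> r * alpha n"
proof -
  obtain d where d: "2 \<le> d" "d \<le> r" "d dvd n"
    using assms by (auto simp: D_def)
  then have "n = d * (n div d)"
    by simp
  also have "\<dots> \<le> r * alpha n"
    using d div_le_alpha by (intro mult_le_mono) simp_all
  finally show ?thesis .
qed

lemma independent_isolated_part:
  assumes "S \<subseteq> Xverts n"
  shows "independent n {v \<in> S. v \<notin> cnbhd_set n (S - {v})}"
  using assms unfolding independent_def cnbhd_set_def cnbhd_def by blast

lemma card_non_isolated_part_le:
  assumes "irredundant n S" "n > 0"
  shows "card {v \<in> S. v \<in> cnbhd_set n (S - {v})} \<le> 4 ^ card (prime_factors n)"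
proof -
  define B where "B = {v \<in> S. v \<in> cnbhd_set n (S - {v})}"
  define P where "P = prime_factors n"
  have "\<forall>v\<in>B. \<exists>w. w \<in> cnbhd n v - cnbhd_set n (S - {v})"
    using assms(1) by (auto simp: B_def irredundant_def)
  then obtain u where u: "\<And>v. v \<in> B \<Longrightarrow> u v \<in> cnbhd n v - cnbhd_set n (S - {v})"
    by metis
  have adjacent: "Xadj n (u v) v" if "v \<in> B" for v
    using u[OF that] that by (auto simp: B_def cnbhd_def)
  have not_adjacent: "\<not> Xadj n (u v) w" if "v \<in> B" "w \<in> S" "w \<noteq> v" for v w
    using u[OF that(1)] that by (auto simp: cnbhd_def cnbhd_set_def)
  have "card B \<le> 4 ^ card P"
  \<comment> \<open>Vertex \<open>x\<close> is coded by the pairs \<open>(p, x mod p)\<close>; adjacency means disjoint codes.\<close>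
  proof (rule card_le_four_pow_if_skew_cross_intersecting
      [where a = "\<lambda>v. (\<lambda>p. (p, v mod p)) ` P" and b = "\<lambda>v. (\<lambda>p. (p, u v mod p)) ` P"])
    show "finite B"
      using assms(1) finite_subset[of S "{0..<n}"] by (auto simp: B_def irredundant_def Xverts_def)
    show "finite ((\<lambda>p. (p, v mod p)) ` P) \<and> finite ((\<lambda>p. (p, u v mod p)) ` P)" for v
      by (simp add: P_def)
    show "card ((\<lambda>p. (p, v mod p)) ` P) \<le> card P \<and> card ((\<lambda>p. (p, u v mod p)) ` P) \<le> card P" for v
      by (simp add: card_image_le P_def)
    show "(\<lambda>p. (p, v mod p)) ` P \<inter> (\<lambda>p. (p, u v mod p)) ` P = {}" if "v \<in> B" for v
      using adjacent[OF that] assms(2) by (auto simp: P_def Xadj_iff_mod_prime_factors)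
    show "(\<lambda>p. (p, w mod p)) ` P \<inter> (\<lambda>p. (p, u v mod p)) ` P \<noteq> {}"
      if "v \<in> B" "w \<in> B" "v \<noteq> w" for v w
      using not_adjacent[of v w] that assms(2) by (auto simp: P_def B_def Xadj_iff_mod_prime_factors)
  qed
  then show ?thesis
    by (simp add: B_def P_def)
qed

lemma IR_le_alpha_add:
  assumes "n > 0"
  shows "IR n \<le> alpha n + 4 ^ card (prime_factors n)"
proof -
  obtain S where S: "irredundant n S" "card S = IR n"
    using IR_attained by blast
  have "finite S"
    using S(1) finite_subset[of S "{0..<n}"] by (auto simp: irredundant_def Xverts_def)
  then have "card S = card {v \<in> S. v \<notin> cnbhd_set n (S - {v})}
                   + card {v \<in> S. v \<in> cnbhd_set n (S - {v})}"
    by (subst card_Un_disjoint[symmetric]) (auto intro: arg_cong[where f = card])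
  also have "\<dots> \<le> alpha n + 4 ^ card (prime_factors n)"
    using S(1) assms
    by (intro add_mono card_le_alpha independent_isolated_part card_non_isolated_part_le)
       (auto simp: irredundant_def)
  finally show ?thesis
    using S(2) by simp
qed

lemma four_pow_card_prime_factors_le_sqrt:
  assumes "n > 0"
  shows "4 ^ card (prime_factors n) \<le> 4 ^ 16 * sqrt (real n)"
proof -
  have "(4 ^ card (prime_factors n)) ^ 2 = real (16 ^ card (prime_factors n))"
    by (simp flip: power_mult add: mult.commute[of _ 2] power_mult)
  also have "\<dots> \<le> real (16 ^ 16 * n)"
    using pow_card_prime_factors_le[OF assms] by (simp only: of_nat_le_iff)
  also have "\<dots> = (4 ^ 16 * sqrt (real n)) ^ 2"
    by (simp add: power_mult_distrib)
  finally show ?thesis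
    by (rule power2_le_imp_le) simp
qed

lemma IR_div_alpha_bounds:
  assumes "n \<in> D r" "n > 0"
  shows "1 \<le> real (IR n) / real (alpha n)"
    and "real (IR n) / real (alpha n) \<le> 1 + 4 ^ 16 * real r / sqrt (real n)"
proof -
  have "n \<le> r * alpha n"
    using le_mult_alpha_if_in_D[OF assms(1)] .
  then have "0 < r * alpha n"
    using assms(2) by linarith
  with \<open>n \<le> r * alpha n\<close> have "real n \<le> real r * real (alpha n)"
    and alpha_pos: "real (alpha n) > 0" and r_pos: "real r > 0"
    by (simp_all flip: of_nat_mult)
  show "1 \<le> real (IR n) / real (alpha n)"
    using alpha_le_IR[of n] alpha_pos by simp
  have "real (IR n) \<le> real (alpha n) + 4 ^ card (prime_factors n)"
    using IR_le_alpha_add[OF assms(2)] by (metis of_nat_add of_nat_le_iff of_nat_numeral of_nat_power)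
  then have "real (IR n) / real (alpha n) \<le> 1 + 4 ^ card (prime_factors n) / real (alpha n)"
    using alpha_pos by (simp add: field_simps)
  also have "4 ^ card (prime_factors n) / real (alpha n) \<le> 4 ^ 16 * sqrt (real n) / (real n / real r)"
    using four_pow_card_prime_factors_le_sqrt[OF assms(2)] \<open>real n \<le> real r * real (alpha n)\<close> assms(2) r_pos
    by (intro frac_le) (auto simp: field_simps)
  also have "4 ^ 16 * sqrt (real n) / (real n / real r) = 4 ^ 16 * real r / sqrt (real n)"
    using assms(2) by (simp add: field_simps real_sqrt_mult[symmetric])
  finally show "real (IR n) / real (alpha n) \<le> 1 + 4 ^ 16 * real r / sqrt (real n)"
    by simp
qed

theorem corollary5p6:
  fixes r :: nat
  assumes "r \<ge> 2"
  shows "((\<lambda>n. real (IR n) / real (alpha n)) \<longlongrightarrow> 1) (inf at_top (principal (D r)))"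
proof (rule tendsto_sandwich[of "\<lambda>n. 1" _ _ "\<lambda>n. 1 + 4 ^ 16 * real r / sqrt (real n)"])
  have in_D: "\<forall>\<^sub>F n in inf at_top (principal (D r)). n \<in> D r \<and> n > 0"
    unfolding eventually_inf_principal eventually_at_top_linorder by (auto intro!: exI[of _ 1])
  show "\<forall>\<^sub>F n in inf at_top (principal (D r)). 1 \<le> real (IR n) / real (alpha n)"
    by (rule eventually_mono[OF in_D]) (use IR_div_alpha_bounds(1) in blast)
  show "\<forall>\<^sub>F n in inf at_top (principal (D r)).
          real (IR n) / real (alpha n) \<le> 1 + 4 ^ 16 * real r / sqrt (real n)"
    by (rule eventually_mono[OF in_D]) (use IR_div_alpha_bounds(2) in blast)
  have "filterlim (\<lambda>n. sqrt (real n)) at_top at_top"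
    by (rule filterlim_compose[OF sqrt_at_top filterlim_real_sequentially])
  then have "((\<lambda>n. 1 + 4 ^ 16 * real r / sqrt (real n)) \<longlongrightarrow> 1 + 0) at_top"
    by (intro tendsto_add tendsto_const tendsto_divide_0[OF tendsto_const] filterlim_at_top_imp_at_infinity)
  then show "((\<lambda>n. 1 + 4 ^ 16 * real r / sqrt (real n)) \<longlongrightarrow> 1) (inf at_top (principal (D r)))"
    by (auto intro: tendsto_mono[rotated])
qed (simp)

end
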